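(* Assume $\lambda_2>\mu$ and $M>\lambda_2-\mu$ (so $\widetilde\lambda>0$), and let $\widehat C>0$. Then for all sufficiently small $\varepsilon>0$ the following holds. Suppose $(n_{1a},n_{1d},n_2)\in(0,\infty)^3$ satisfies - $n_2\in(\bar n_2-2\sqrt\varepsilon,\bar n_2+2\sqrt\varepsilon)$, - $n_{1a}+n_{1d}\in(\varepsilon/\widehat C,\sqrt\varepsilon)$, - $n_{1d}/n_{1a}=\pi_{1d}/\pi_{1a}$. Then $$\frac{pC(n_{1a}+n_2)}{\kappa\mu+\sigma}>\frac{n_{1d}}{n_{1a}}>\frac{\mu-\lambda_1+C(n_2+n_{1a})+\tau n_2}{\sigma}.$$
   Context: Let $\lambda_1,\lambda_2,\mu,C,\sigma,\tau>0$, $p\in(0,1)$ and $\kappa\ge 0$. Set $$M:=\frac{Cp\sigma}{\tau(\kappa\mu+\sigma)}(\lambda_2-\mu)+\frac{C}{\tau}(\lambda_1-\lambda_2),\qquad \bar n_2:=\max(\lambda_2-\mu,0)/C.$$ Let $$J:=\begin{pmatrix}\lambda_1-\lambda_2-\frac{\tau}{C}(\lambda_2-\mu) & p(\lambda_2-\mu)\\ \sigma & -\kappa\mu-\sigma\end{pmatrix}.$$ Let $\widetilde\lambda$ be the eigenvalue of $J$ with the largest real part. When $\lambda_2>\mu$, $\widetilde\lambda$ is real (its Perron root). Let $(\pi_{1a},\pi_{1d})$ be the left eigenvector of $J$ for $\widetilde\lambda$ with positive entries and $\pi_{1a}+\pi_{1d}=1$. *)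

theory Defs
  imports Complex_Main
begin

definition J11 :: "real \<Rightarrow> real \<Rightarrow> real \<Rightarrow> real \<Rightarrow> real \<Rightarrow> real" where
  "J11 l1 l2 mu C tau = l1 - l2 - (tau / C) * (l2 - mu)"
definition J12 :: "real \<Rightarrow> real \<Rightarrow> real \<Rightarrow> real" where
  "J12 p l2 mu = p * (l2 - mu)"
definition J21 :: "real \<Rightarrow> real" where
  "J21 sigma = sigma"
definition J22 :: "real \<Rightarrow> real \<Rightarrow> real \<Rightarrow> real" where
  "J22 kappa mu sigma = - kappa * mu - sigma"

definition is_eigenvalue2 :: "real \<Rightarrow> real \<Rightarrow> real \<Rightarrow> real \<Rightarrow> complex \<Rightarrow> bool" where
  "is_eigenvalue2 a b c d z \<longleftrightarrow> (z - of_real a) * (z - of_real d) - of_real b * of_real c = 0"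

definition is_top_eigenvalue2 :: "real \<Rightarrow> real \<Rightarrow> real \<Rightarrow> real \<Rightarrow> real \<Rightarrow> bool" where
  "is_top_eigenvalue2 a b c d lam \<longleftrightarrow>
     is_eigenvalue2 a b c d (of_real lam) \<and> (\<forall>z. is_eigenvalue2 a b c d z \<longrightarrow> Re z \<le> lam)"

definition is_left_eigvec2 :: "real \<Rightarrow> real \<Rightarrow> real \<Rightarrow> real \<Rightarrow> real \<Rightarrow> real \<Rightarrow> real \<Rightarrow> bool" where
  "is_left_eigvec2 a b c d lam x y \<longleftrightarrow> x * a + y * c = lam * x \<and> x * b + y * d = lam * y"

end

theory Submission
  imports Defs
begin

text \<open>The hypothesis \<open>M > \<lambda>\<^sub>2 - \<mu>\<close> says exactly that \<open>det J < 0\<close>, so the Perron root \<open>\<lambda>\<close>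
  is positive. Put \<open>n\<^sub>2\<^sup>* = (\<lambda>\<^sub>2 - \<mu>)/C\<close>. The left eigenvector equations give
  \<open>r = \<pi>\<^sub>1\<^sub>d / \<pi>\<^sub>1\<^sub>a\<close> as \<open>r \<sigma> = \<lambda> - J\<^sub>1\<^sub>1\<close> and \<open>r (\<lambda> + \<kappa>\<mu> + \<sigma>) = J\<^sub>1\<^sub>2 = p C n\<^sub>2\<^sup>*\<close>.
  Hence at \<open>(n\<^sub>1\<^sub>a, n\<^sub>2) = (0, n\<^sub>2\<^sup>*)\<close> the two claimed inequalities hold with the fixed margins
  \<open>r \<lambda>\<close> and \<open>\<lambda>\<close>, which absorb perturbations of order \<open>\<surd>\<epsilon>\<close>.\<close>

lemma is_eigenvalue2_of_real_iff:
  "is_eigenvalue2 a b c d (of_real x) \<longleftrightarrow> (x - a) * (x - d) - b * c = 0"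
proof -
  have "(of_real x - of_real a) * (of_real x - of_real d) - of_real b * of_real c
        = (of_real ((x - a) * (x - d) - b * c) :: complex)" by simp
  then show ?thesis unfolding is_eigenvalue2_def by (simp only: of_real_eq_0_iff)
qed

lemma is_eigenvalue2_trace_conjugate:
  assumes "is_eigenvalue2 a b c d (of_real x)"
  shows "is_eigenvalue2 a b c d (of_real (a + d - x))"
  using assms unfolding is_eigenvalue2_of_real_iff by (simp add: algebra_simps)

lemma is_top_eigenvalue2_unique:
  assumes "is_top_eigenvalue2 a b c d x" "is_top_eigenvalue2 a b c d y"
  shows "x = y"
  using assms unfolding is_top_eigenvalue2_def by (metis Re_complex_of_real order_antisym)

text \<open>The two real eigenvalues \<open>x\<close> and \<open>a + d - x\<close> have product \<open>det\<close>, so they have opposite signs.\<close>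
lemma is_top_eigenvalue2_pos:
  assumes top: "is_top_eigenvalue2 a b c d x" and det: "a * d - b * c < 0"
  shows "x > 0"
proof (rule ccontr)
  assume "\<not> x > 0"
  have eig: "is_eigenvalue2 a b c d (of_real x)" using top unfolding is_top_eigenvalue2_def ..
  then have "a + d - x \<le> x"
    using top is_eigenvalue2_trace_conjugate unfolding is_top_eigenvalue2_def
    by (metis Re_complex_of_real)
  moreover have "x * (a + d - x) = a * d - b * c"
    using eig unfolding is_eigenvalue2_of_real_iff by (simp add: algebra_simps)
  ultimately show False using det \<open>\<not> x > 0\<close> mult_nonpos_nonpos[of x "a + d - x"] by linarith
qed

lemma is_left_eigvec2_ratio:
  assumes "is_left_eigvec2 a b c d lam x y" "x \<noteq> 0"
  shows "y / x * c = lam - a" and "y / x * (lam - d) = b"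
  using assms unfolding is_left_eigvec2_def by (auto simp: field_simps)

lemma det_J_neg:
  fixes l1 l2 mu C sigma tau p kappa :: real
  assumes "C > 0" "tau > 0" "sigma > 0" "kappa \<ge> 0" "mu > 0"
    and "(C * p * sigma) / (tau * (kappa * mu + sigma)) * (l2 - mu) + (C / tau) * (l1 - l2) > l2 - mu"
  shows "J11 l1 l2 mu C tau * J22 kappa mu sigma - J12 p l2 mu * J21 sigma < 0"
proof -
  define K where "K = kappa * mu + sigma"
  have "K > 0" unfolding K_def using assms by (simp add: add_nonneg_pos)
  have "tau / C * (l2 - mu) < tau / C * ((C * p * sigma) / (tau * K) * (l2 - mu) + (C / tau) * (l1 - l2))"
    using assms unfolding K_def by (intro mult_strict_left_mono) auto
  also have "\<dots> = p * (l2 - mu) * sigma / K + (l1 - l2)"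
    using assms \<open>K > 0\<close> by (simp add: field_simps)
  finally have "J11 l1 l2 mu C tau + p * (l2 - mu) * sigma / K > 0"
    unfolding J11_def by simp
  then have "K * J11 l1 l2 mu C tau + p * (l2 - mu) * sigma > 0"
    using \<open>K > 0\<close> by (simp add: field_simps)
  then show ?thesis unfolding J12_def J21_def J22_def K_def by (simp add: algebra_simps)
qed

lemma eigen_ratio_upper_bound:
  fixes r lam K p C nbar n1a n2 s :: real
  assumes "r * (lam + K) = p * C * nbar" "K > 0" "p * C > 0"
    and "nbar - 2 * s < n2" "n1a > 0" "2 * p * C * s < r * lam"
  shows "r < p * C * (n1a + n2) / K"
proof -
  have "r * K = p * C * nbar - r * lam" using assms(1) by (simp add: algebra_simps)
  also have "\<dots> < p * C * (nbar - 2 * s)" using assms(6) by (simp add: algebra_simps)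
  also have "\<dots> < p * C * (n1a + n2)"
    using assms(3-5) by (intro mult_strict_left_mono) auto
  finally show ?thesis using \<open>K > 0\<close> by (simp add: field_simps)
qed

lemma eigen_ratio_lower_bound:
  fixes r lam sigma l1 mu C tau nbar n1a n2 s :: real
  assumes "r * sigma = lam - (l1 - mu - (C + tau) * nbar)" "sigma > 0" "C > 0" "tau > 0"
    and "n2 < nbar + 2 * s" "n1a < s" "(3 * C + 2 * tau) * s < lam"
  shows "(mu - l1 + C * (n2 + n1a) + tau * n2) / sigma < r"
proof -
  have "C * (n2 + n1a) < C * (nbar + 2 * s + s)" and "tau * n2 < tau * (nbar + 2 * s)"
    using assms(3-6) by (intro mult_strict_left_mono; simp)+
  then have "mu - l1 + C * (n2 + n1a) + tau * n2
        < mu - l1 + C * (nbar + 2 * s + s) + tau * (nbar + 2 * s)"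
    by linarith
  also have "\<dots> < r * sigma" using assms(1,7) by (simp add: algebra_simps)
  finally show ?thesis using \<open>sigma > 0\<close> by (simp add: field_simps)
qed

lemma left_eigvec_J_ratio_bounds:
  fixes l1 l2 mu C sigma tau p kappa lam pa pd n1a n2 s :: real
  assumes "C > 0" "sigma > 0" "tau > 0" "p > 0" "kappa \<ge> 0" "mu > 0"
    and eigvec: "is_left_eigvec2 (J11 l1 l2 mu C tau) (J12 p l2 mu) (J21 sigma) (J22 kappa mu sigma)
      lam pa pd" and "pa > 0"
    and n2_lower: "(l2 - mu) / C - 2 * s < n2" and n2_upper: "n2 < (l2 - mu) / C + 2 * s"
    and "0 < n1a" "n1a < s"
    and "2 * p * C * s < pd / pa * lam" "(3 * C + 2 * tau) * s < lam"
  shows "pd / pa < p * C * (n1a + n2) / (kappa * mu + sigma)"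
    and "(mu - l1 + C * (n2 + n1a) + tau * n2) / sigma < pd / pa"
proof -
  define nbar where "nbar = (l2 - mu) / C"
  have "kappa * mu + sigma > 0" using assms by (simp add: add_nonneg_pos)
  have "J11 l1 l2 mu C tau = l1 - mu - (C + tau) * nbar" and "J12 p l2 mu = p * C * nbar"
    using \<open>C > 0\<close> unfolding J11_def J12_def nbar_def by (auto simp: field_simps)
  with is_left_eigvec2_ratio[OF eigvec] \<open>pa > 0\<close>
  have ratio_J11: "pd / pa * sigma = lam - (l1 - mu - (C + tau) * nbar)"
    and ratio_J12: "pd / pa * (lam + (kappa * mu + sigma)) = p * C * nbar"
    unfolding J21_def J22_def by (auto simp: algebra_simps)
  show "pd / pa < p * C * (n1a + n2) / (kappa * mu + sigma)"
    using eigen_ratio_upper_bound[OF ratio_J12 \<open>kappa * mu + sigma > 0\<close>] n2_lower assms(4,1,11,13)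
    unfolding nbar_def by simp
  show "(mu - l1 + C * (n2 + n1a) + tau * n2) / sigma < pd / pa"
    using eigen_ratio_lower_bound[OF ratio_J11 assms(2,1,3)] n2_upper assms(12,14)
    unfolding nbar_def by simp
qed

theorem lemmaD4:
  fixes l1 l2 mu C sigma tau p kappa Chat :: real
  assumes "l1 > 0" "l2 > 0" "mu > 0" "C > 0" "sigma > 0" "tau > 0"
    and "0 < p" "p < 1" "kappa \<ge> 0"
    and "l2 > mu"
    and "(C * p * sigma) / (tau * (kappa * mu + sigma)) * (l2 - mu) + (C / tau) * (l1 - l2) > l2 - mu"
    and "Chat > 0"
  shows "\<exists>eps0 > 0. \<forall>eps. 0 < eps \<and> eps < eps0 \<longrightarrow>
    (\<forall>lam pa pd n1a n1d n2.
       is_top_eigenvalue2 (J11 l1 l2 mu C tau) (J12 p l2 mu) (J21 sigma) (J22 kappa mu sigma) lam \<and>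
       is_left_eigvec2 (J11 l1 l2 mu C tau) (J12 p l2 mu) (J21 sigma) (J22 kappa mu sigma) lam pa pd \<and>
       pa > 0 \<and> pd > 0 \<and> pa + pd = 1 \<and>
       n1a > 0 \<and> n1d > 0 \<and> n2 > 0 \<and>
       max (l2 - mu) 0 / C - 2 * sqrt eps < n2 \<and> n2 < max (l2 - mu) 0 / C + 2 * sqrt eps \<and>
       eps / Chat < n1a + n1d \<and> n1a + n1d < sqrt eps \<and>
       n1d / n1a = pd / pa
     \<longrightarrow>
       p * C * (n1a + n2) / (kappa * mu + sigma) > n1d / n1a \<and>
       n1d / n1a > (mu - l1 + C * (n2 + n1a) + tau * n2) / sigma)"
proof -
  define a b d where "a = J11 l1 l2 mu C tau" and "b = J12 p l2 mu" and "d = J22 kappa mu sigma"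
  show ?thesis
  proof (cases "\<exists>lam0. is_top_eigenvalue2 a b sigma d lam0")
    case False
    then show ?thesis unfolding a_def b_def d_def J21_def by (intro exI[of _ 1]) auto
  next
    case True
    then obtain lam0 where top0: "is_top_eigenvalue2 a b sigma d lam0" ..
    have "a * d - b * sigma < 0"
      using det_J_neg[OF assms(4,6,5,9,3,11)] unfolding a_def b_def d_def J21_def .
    then have "lam0 > 0" using is_top_eigenvalue2_pos[OF top0] by blast
    define r0 where "r0 = b / (lam0 - d)"
    have "kappa * mu \<ge> 0" using assms(3,9) by simp
    then have "lam0 - d > 0" using \<open>lam0 > 0\<close> assms(5) unfolding d_def J22_def by simp
    then have "r0 > 0" using assms unfolding r0_def b_def J12_def by simp
    define g where "g = min (r0 * lam0 / (2 * p * C)) (lam0 / (3 * C + 2 * tau))"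
    have "g > 0" unfolding g_def using \<open>lam0 > 0\<close> \<open>r0 > 0\<close> assms by auto
    show ?thesis
    proof (intro exI[of _ "g^2"] conjI allI impI)
      show "g^2 > 0" using \<open>g > 0\<close> by simp
      fix eps lam pa pd n1a n1d n2
      assume eps: "0 < eps \<and> eps < g^2" and H: "is_top_eigenvalue2 (J11 l1 l2 mu C tau) (J12 p l2 mu) (J21 sigma) (J22 kappa mu sigma) lam \<and>
       is_left_eigvec2 (J11 l1 l2 mu C tau) (J12 p l2 mu) (J21 sigma) (J22 kappa mu sigma) lam pa pd \<and>
       pa > 0 \<and> pd > 0 \<and> pa + pd = 1 \<and>
       n1a > 0 \<and> n1d > 0 \<and> n2 > 0 \<and>
       max (l2 - mu) 0 / C - 2 * sqrt eps < n2 \<and> n2 < max (l2 - mu) 0 / C + 2 * sqrt eps \<and>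
       eps / Chat < n1a + n1d \<and> n1a + n1d < sqrt eps \<and>
       n1d / n1a = pd / pa"
      then have "lam = lam0"
        using is_top_eigenvalue2_unique[OF _ top0] unfolding a_def b_def d_def J21_def by blast
      with H have eigvec: "is_left_eigvec2 (J11 l1 l2 mu C tau) (J12 p l2 mu) (J21 sigma)
          (J22 kappa mu sigma) lam0 pa pd" and "pa > 0" by auto
      then have "pd / pa = r0"
        using is_left_eigvec2_ratio(2)[OF eigvec] \<open>lam0 - d > 0\<close>
        unfolding r0_def b_def d_def by (simp add: field_simps)
      have "sqrt eps < g" using real_sqrt_less_iff[of eps "g^2"] eps \<open>g > 0\<close> by simp
      then have "sqrt eps < r0 * lam0 / (2 * p * C)" and "sqrt eps < lam0 / (3 * C + 2 * tau)"
        unfolding g_def by simp_all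
      then have slack_upper: "2 * p * C * sqrt eps < pd / pa * lam0"
        and slack_lower: "(3 * C + 2 * tau) * sqrt eps < lam0"
        using assms \<open>pd / pa = r0\<close> by (simp_all add: pos_less_divide_eq mult.commute)
      from H assms(10) have n2_lower: "(l2 - mu) / C - 2 * sqrt eps < n2"
        and n2_upper: "n2 < (l2 - mu) / C + 2 * sqrt eps"
        and "0 < n1a" and "n1a < sqrt eps" and ratio: "n1d / n1a = pd / pa"
        by auto
      note bounds = left_eigvec_J_ratio_bounds[OF assms(4,5,6,7,9,3) eigvec \<open>pa > 0\<close>
          n2_lower n2_upper \<open>0 < n1a\<close> \<open>n1a < sqrt eps\<close> slack_upper slack_lower]
      show "p * C * (n1a + n2) / (kappa * mu + sigma) > n1d / n1a"
        and "n1d / n1a > (mu - l1 + C * (n2 + n1a) + tau * n2) / sigma"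
        using bounds unfolding ratio by simp_all
    qed
  qed
qed

end
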